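(* Let $\mathcal{C}$ be a component of class $i$ (at an upper layer $l$) which has $\Omega(k)$ pairwise internally vertex-disjoint long connector paths. Then for every maximal matching $M$ in $\mathcal{H}_i$, the edges $\{v_{\mathcal{C}},w_{\mathcal{C}}\}$ of $M$ lying in $\mathcal{H}_i[\mathcal{C}]$ correspond (via their vertices $v,w$) to $\Omega(k)$ pairwise internally vertex-disjoint long connector paths for $\mathcal{C}$.
   Context: $G=(V,E)$ is a finite undirected graph with vertex connectivity $k$. Fix an integer $L$. The virtual graph $\mathcal{G}$ contains $3L$ copies of each $v\in V$: each lower layer $1,\dots,L$ contains one copy of every node; each upper layer $L+1,\dots,2L$ contains a type-1 copy and a type-2 copy of every node. Every copy of $v$ is adjacent to all other copies of $v$ and to all copies of each neighbor of $v$ in $G$. $\Psi$ maps virtual nodes to real nodes. There are classes $1,\dots,t$. For a fixed upper layer $l$, nodes of layers $1,\dots,l-1$ are old nodes, each assigned a class; a component of class $i$ is a connected component of the subgraph induced by old nodes of class $i$. A long connector path for $\mathcal{C}$ is a path $(s,v,w,u)$ with $s\in\mathcal{C}$, $u$ in a component $\mathcal{C}'\neq\mathcal{C}$ of class $i$ with $\Psi(\mathcal{C})\cap\Psi(\mathcal{C}')=\emptyset$, $v$ a type-2 and $w$ a type-1 node of layer $l$, $v$ having no neighbor in any component of class $i$ other than $\mathcal{C}$ and $w$ having no neighbor in $\mathcal{C}$; its internal vertices are $v,w$, and paths are internally vertex-disjoint if their sets of internal vertices are pairwise disjoint. The helper graph $\mathcal{H}_i[\mathcal{C}]$: for each type-2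 node $v$ of layer $l$, a node $v_{\mathcal{C}}$ is added iff $\Psi(v)\notin\Psi(\mathcal{C})$, $v$ has a neighbor in $\mathcal{C}$, and $v$ has no neighbor in another component of class $i$; for each such $v_{\mathcal{C}}$ and each type-1 neighbor $w$ of $v$ on layer $l$ that has a neighbor in some component $\mathcal{C}'\neq\mathcal{C}$ of class $i$ but no neighbor in $\mathcal{C}$, a node $w_{\mathcal{C}}$ and the edge $\{v_{\mathcal{C}},w_{\mathcal{C}}\}$ are added. $\mathcal{H}_i$ is the disjoint union of the $\mathcal{H}_i[\mathcal{C}]$ over all components $\mathcal{C}$ of class $i$. *)

theory Defs
  imports Complex_Main
begin

definition graph_connected :: "'a set \<Rightarrow> ('a \<Rightarrow> 'a \<Rightarrow> bool) \<Rightarrow> bool" where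
  "graph_connected X E \<longleftrightarrow>
     (\<forall>x\<in>X. \<forall>y\<in>X. (x, y) \<in> {(a, b). a \<in> X \<and> b \<in> X \<and> E a b}\<^sup>*)"

(* vertex connectivity: least number of vertices whose removal disconnects G
   or leaves at most one vertex (so K_n has connectivity n-1) *)
definition vertex_connectivity :: "'a set \<Rightarrow> ('a \<Rightarrow> 'a \<Rightarrow> bool) \<Rightarrow> nat" where
  "vertex_connectivity V E =
     (LEAST k. \<exists>S\<subseteq>V. card S = k \<and> (card (V - S) \<le> 1 \<or> \<not> graph_connected (V - S) E))"

(* virtual node: VN layer type base;  type 0 = lower layer node, 1/2 = type-1/type-2 copy *)
datatype 'a vnode = VN nat nat 'a

fun layer :: "'a vnode \<Rightarrow> nat" where "layer (VN j t x) = j"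
fun vtype :: "'a vnode \<Rightarrow> nat" where "vtype (VN j t x) = t"
fun Psi :: "'a vnode \<Rightarrow> 'a" where "Psi (VN j t x) = x"

definition vnodes :: "'a set \<Rightarrow> nat \<Rightarrow> 'a vnode set" where
  "vnodes V L =
     {VN j 0 x | j x. 1 \<le> j \<and> j \<le> L \<and> x \<in> V} \<union>
     {VN j t x | j t x. L + 1 \<le> j \<and> j \<le> 2 * L \<and> t \<in> {1, 2} \<and> x \<in> V}"

definition vadj :: "'a set \<Rightarrow> ('a \<Rightarrow> 'a \<Rightarrow> bool) \<Rightarrow> nat \<Rightarrow> 'a vnode \<Rightarrow> 'a vnode \<Rightarrow> bool" where
  "vadj V E L a b \<longleftrightarrow> a \<in> vnodes V L \<and> b \<in> vnodes V L \<and> a \<noteq> b \<and>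
     (Psi a = Psi b \<or> E (Psi a) (Psi b))"

definition has_nbr_in :: "'a set \<Rightarrow> ('a \<Rightarrow> 'a \<Rightarrow> bool) \<Rightarrow> nat \<Rightarrow> 'a vnode \<Rightarrow> 'a vnode set \<Rightarrow> bool" where
  "has_nbr_in V E L a X \<longleftrightarrow> (\<exists>b\<in>X. vadj V E L a b)"

definition class_nodes :: "'a set \<Rightarrow> nat \<Rightarrow> nat \<Rightarrow> ('a vnode \<Rightarrow> nat) \<Rightarrow> nat \<Rightarrow> 'a vnode set" where
  "class_nodes V L l cls i = {a \<in> vnodes V L. layer a < l \<and> cls a = i}"

definition components :: "'a set \<Rightarrow> ('a \<Rightarrow> 'a \<Rightarrow> bool) \<Rightarrow> nat \<Rightarrow> nat \<Rightarrow> ('a vnode \<Rightarrow> nat) \<Rightarrow> nat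
    \<Rightarrow> 'a vnode set set" where
  "components V E L l cls i =
     (let S = class_nodes V L l cls i
      in {{b. (a, b) \<in> {(x, y). x \<in> S \<and> y \<in> S \<and> vadj V E L x y}\<^sup>*} | a. a \<in> S})"

definition long_connector :: "'a set \<Rightarrow> ('a \<Rightarrow> 'a \<Rightarrow> bool) \<Rightarrow> nat \<Rightarrow> nat \<Rightarrow> ('a vnode \<Rightarrow> nat) \<Rightarrow> nat
    \<Rightarrow> 'a vnode set \<Rightarrow> 'a vnode \<times> 'a vnode \<times> 'a vnode \<times> 'a vnode \<Rightarrow> bool" where
  "long_connector V E L l cls i C p \<longleftrightarrow>
     (case p of (s, v, w, u) \<Rightarrow>
        C \<in> components V E L l cls i \<and> s \<in> C \<and>
        (\<exists>C'\<in>components V E L l cls i. C' \<noteq> C \<and> u \<in> C' \<and> Psi ` C \<inter> Psi ` C' = {}) \<and>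
        v \<in> vnodes V L \<and> layer v = l \<and> vtype v = 2 \<and>
        w \<in> vnodes V L \<and> layer w = l \<and> vtype w = 1 \<and>
        vadj V E L s v \<and> vadj V E L v w \<and> vadj V E L w u \<and>
        (\<forall>C'\<in>components V E L l cls i. C' \<noteq> C \<longrightarrow> \<not> has_nbr_in V E L v C') \<and>
        \<not> has_nbr_in V E L w C)"

fun internal :: "'a vnode \<times> 'a vnode \<times> 'a vnode \<times> 'a vnode \<Rightarrow> 'a vnode set" where
  "internal (s, v, w, u) = {v, w}"

definition internally_disjoint :: "('a vnode \<times> 'a vnode \<times> 'a vnode \<times> 'a vnode) set \<Rightarrow> bool" where
  "internally_disjoint P \<longleftrightarrow> (\<forall>p\<in>P. \<forall>q\<in>P. p \<noteq> q \<longrightarrow> internal p \<inter> internal q = {})"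

definition helper_vnode :: "'a set \<Rightarrow> ('a \<Rightarrow> 'a \<Rightarrow> bool) \<Rightarrow> nat \<Rightarrow> nat \<Rightarrow> ('a vnode \<Rightarrow> nat) \<Rightarrow> nat
    \<Rightarrow> 'a vnode set \<Rightarrow> 'a vnode \<Rightarrow> bool" where
  "helper_vnode V E L l cls i C v \<longleftrightarrow>
     v \<in> vnodes V L \<and> layer v = l \<and> vtype v = 2 \<and> Psi v \<notin> Psi ` C \<and>
     has_nbr_in V E L v C \<and>
     (\<forall>C'\<in>components V E L l cls i. C' \<noteq> C \<longrightarrow> \<not> has_nbr_in V E L v C')"

(* edge set of H_i = disjoint union of the H_i[C]; node x_C is the pair (x, C) *)
definition helper_edges :: "'a set \<Rightarrow> ('a \<Rightarrow> 'a \<Rightarrow> bool) \<Rightarrow> nat \<Rightarrow> nat \<Rightarrow> ('a vnode \<Rightarrow> nat) \<Rightarrow> nat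
    \<Rightarrow> ('a vnode \<times> 'a vnode set) set set" where
  "helper_edges V E L l cls i =
     {{(v, C), (w, C)} | v w C.
        C \<in> components V E L l cls i \<and> helper_vnode V E L l cls i C v \<and>
        w \<in> vnodes V L \<and> layer w = l \<and> vtype w = 1 \<and> vadj V E L v w \<and>
        (\<exists>C'\<in>components V E L l cls i. C' \<noteq> C \<and> has_nbr_in V E L w C') \<and>
        \<not> has_nbr_in V E L w C}"

definition maximal_matching :: "'b set set \<Rightarrow> 'b set set \<Rightarrow> bool" where
  "maximal_matching H M \<longleftrightarrow> M \<subseteq> H \<and>
     (\<forall>e\<in>M. \<forall>f\<in>M. e \<noteq> f \<longrightarrow> e \<inter> f = {}) \<and>
     (\<forall>e\<in>H - M. \<exists>f\<in>M. e \<inter> f \<noteq> {})"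

end

theory Submission
  imports Defs
begin

text \<open>The helper edge of a long connector (s, v, w, u) for C is {v, w} \<times> {C}. Every edge of
H_i meeting such an edge lies in H_i[C], so by maximality each of the given internally disjoint
connectors shares a node with an edge of M inside H_i[C]; as those nodes are distinct and each
edge has two of them, M contains at least half as many edges in H_i[C] as there are connectors.
Conversely every edge of H_i[C] arises from a long connector: its type-1 endpoint w sees a
different component C', and C' is disjoint from C under \<Psi> because all copies of a real node are
pairwise adjacent. Matched edges being disjoint, these connectors are internally disjoint.\<close>

lemma vadj_sym: "(\<forall>x y. E x y \<longrightarrow> E y x) \<Longrightarrow> vadj V E L a b \<Longrightarrow> vadj V E L b a"
  by (auto simp: vadj_def)

lemma finite_vnodes: "finite V \<Longrightarrow> finite (vnodes V L)"
proof -
  assume "finite V"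
  have "vnodes V L \<subseteq> (\<lambda>(j, t, x). VN j t x) ` ({..2 * L} \<times> {..2::nat} \<times> V)"
    unfolding vnodes_def by (auto simp: image_iff)
  then show ?thesis
    using \<open>finite V\<close> by (meson finite_SigmaI finite_atMost finite_imageI finite_subset)
qed

lemma rtrancl_classes_eq:
  assumes "sym R" and "(a, a') \<in> R\<^sup>*"
  shows "{b. (a, b) \<in> R\<^sup>*} = {b. (a', b) \<in> R\<^sup>*}"
proof -
  have "(a', a) \<in> R\<^sup>*"
    using assms sym_rtrancl by (metis symD)
  with assms(2) show ?thesis
    by (auto intro: rtrancl_trans)
qed

lemma components_subset_class_nodes:
  assumes "C \<in> components V E L l cls i"
  shows "C \<subseteq> class_nodes V L l cls i"
proof
  fix b assume "b \<in> C"
  with assms obtain a where "(a, b) \<in> {(x, y). x \<in> class_nodes V L l cls i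
                          \<and> y \<in> class_nodes V L l cls i \<and> vadj V E L x y}\<^sup>*"
    and "a \<in> class_nodes V L l cls i"
    unfolding components_def Let_def by auto
  then show "b \<in> class_nodes V L l cls i"
    by (cases rule: rtranclE) auto
qed

lemma components_Psi_disjoint:
  assumes sym: "\<forall>x y. E x y \<longrightarrow> E y x"
    and C: "C \<in> components V E L l cls i" and C': "C' \<in> components V E L l cls i"
    and "C \<noteq> C'"
  shows "Psi ` C \<inter> Psi ` C' = {}"
proof (rule ccontr)
  define S where "S = class_nodes V L l cls i"
  define R where "R = {(x, y). x \<in> S \<and> y \<in> S \<and> vadj V E L x y}"
  have "sym R"
    unfolding R_def sym_def using vadj_sym[OF sym] by blast
  obtain a where a: "C = {b. (a, b) \<in> R\<^sup>*}"
    using C unfolding components_def Let_def S_def R_def by auto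
  obtain a' where a': "C' = {b. (a', b) \<in> R\<^sup>*}"
    using C' unfolding components_def Let_def S_def R_def by auto
  assume "Psi ` C \<inter> Psi ` C' \<noteq> {}"
  then obtain x y where x: "x \<in> C" and y: "y \<in> C'" and "Psi x = Psi y"
    by auto
  have "x \<in> S" "y \<in> S"
    using C C' x y unfolding S_def by (blast dest: components_subset_class_nodes)+
  moreover have "S \<subseteq> vnodes V L"
    unfolding S_def class_nodes_def by auto
  \<comment> \<open>distinct copies of one real node are adjacent\<close>
  ultimately have "(x, y) \<in> R\<^sup>*"
    using \<open>Psi x = Psi y\<close> by (cases "x = y") (auto simp: R_def vadj_def intro!: r_into_rtrancl)
  then have "(a, y) \<in> R\<^sup>*"
    using x a by auto
  moreover have "(y, a') \<in> R\<^sup>*"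
    using y a' \<open>sym R\<close> sym_rtrancl by (metis mem_Collect_eq symD)
  ultimately have "C = C'"
    unfolding a a' using rtrancl_classes_eq[OF \<open>sym R\<close>] by (meson rtrancl_trans)
  with \<open>C \<noteq> C'\<close> show False ..
qed

lemma connector_edge_eq: "(\<lambda>(s, v, w, u). {(v, C), (w, C)}) = (\<lambda>p. internal p \<times> {C})"
  by auto

lemma long_connector_in_helper_edges:
  assumes sym: "\<forall>x y. E x y \<longrightarrow> E y x"
    and lc: "long_connector V E L l cls i C p"
  shows "internal p \<times> {C} \<in> helper_edges V E L l cls i"
proof -
  obtain s v w u where p: "p = (s, v, w, u)"
    by (cases p)
  from lc have C: "C \<in> components V E L l cls i" and "s \<in> C"
    and v: "v \<in> vnodes V L" "layer v = l" "vtype v = 2"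
    and w: "w \<in> vnodes V L" "layer w = l" "vtype w = 1"
    and "vadj V E L s v" and vw: "vadj V E L v w" and "vadj V E L w u"
    and v_only_C: "\<forall>C'\<in>components V E L l cls i. C' \<noteq> C \<longrightarrow> \<not> has_nbr_in V E L v C'"
    and w_not_C: "\<not> has_nbr_in V E L w C"
    and "\<exists>C'\<in>components V E L l cls i. C' \<noteq> C \<and> u \<in> C'"
    unfolding long_connector_def p by auto
  have "Psi v \<notin> Psi ` C"
  proof
    assume "Psi v \<in> Psi ` C"
    then obtain s' where s': "s' \<in> C" "Psi v = Psi s'"
      by auto
    then have "s' \<in> vnodes V L" "layer s' < l"
      using components_subset_class_nodes[OF C] unfolding class_nodes_def by auto
    \<comment> \<open>w is adjacent to v and hence to every other copy of Psi v\<close>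
    then have "vadj V E L w s'"
      using vw s' w sym by (auto simp: vadj_def)
    with w_not_C s' show False
      by (auto simp: has_nbr_in_def)
  qed
  moreover have "has_nbr_in V E L v C"
    using \<open>s \<in> C\<close> vadj_sym[OF sym \<open>vadj V E L s v\<close>] by (auto simp: has_nbr_in_def)
  ultimately have "helper_vnode V E L l cls i C v"
    using v v_only_C by (simp add: helper_vnode_def)
  moreover have "\<exists>C'\<in>components V E L l cls i. C' \<noteq> C \<and> has_nbr_in V E L w C'"
    using \<open>\<exists>C'\<in>_. _\<close> \<open>vadj V E L w u\<close> by (auto simp: has_nbr_in_def)
  moreover have "internal p \<times> {C} = {(v, C), (w, C)}"
    by (auto simp: p)
  ultimately show ?thesis
    unfolding helper_edges_def using C w vw w_not_C by blast
qed

lemma helper_edge_at_component_is_connector_edge: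
  assumes sym: "\<forall>x y. E x y \<longrightarrow> E y x"
    and e: "e \<in> helper_edges V E L l cls i" and eC: "e = {(v0, C), (w0, C)}"
  shows "\<exists>p. long_connector V E L l cls i C p \<and> internal p \<times> {C} = e"
proof -
  obtain v w C0 where e_eq: "e = {(v, C0), (w, C0)}"
    and C0: "C0 \<in> components V E L l cls i" and hv: "helper_vnode V E L l cls i C0 v"
    and w: "w \<in> vnodes V L" "layer w = l" "vtype w = 1" and vw: "vadj V E L v w"
    and w_other: "\<exists>C'\<in>components V E L l cls i. C' \<noteq> C0 \<and> has_nbr_in V E L w C'"
    and w_not_C0: "\<not> has_nbr_in V E L w C0"
    using e unfolding helper_edges_def by (elim CollectE exE conjE) blast
  have "(v, C0) \<in> e"
    using e_eq by simp
  then have "C0 = C"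
    using eC by auto
  from hv obtain s where s: "s \<in> C" "vadj V E L v s"
    and v: "v \<in> vnodes V L" "layer v = l" "vtype v = 2"
    and v_only_C: "\<forall>C'\<in>components V E L l cls i. C' \<noteq> C \<longrightarrow> \<not> has_nbr_in V E L v C'"
    unfolding helper_vnode_def has_nbr_in_def \<open>C0 = C\<close> by blast
  from w_other obtain C' u where C': "C' \<in> components V E L l cls i" "C' \<noteq> C" "u \<in> C'"
    and "vadj V E L w u"
    unfolding has_nbr_in_def \<open>C0 = C\<close> by blast
  have "Psi ` C \<inter> Psi ` C' = {}"
    using components_Psi_disjoint[OF sym C0 C'(1)] C'(2) \<open>C0 = C\<close> by simp
  with C' have "\<exists>C'\<in>components V E L l cls i. C' \<noteq> C \<and> u \<in> C' \<and> Psi ` C \<inter> Psi ` C' = {}"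
    by blast
  then have "long_connector V E L l cls i C (s, v, w, u)"
    unfolding long_connector_def prod.case
    using C0 s w v vw v_only_C w_not_C0 \<open>vadj V E L w u\<close> vadj_sym[OF sym s(2)]
    unfolding \<open>C0 = C\<close> by (intro conjI) simp_all
  moreover have "internal (s, v, w, u) \<times> {C} = e"
    using e_eq \<open>C0 = C\<close> by auto
  ultimately show ?thesis
    by blast
qed

lemma card_le_card_if_disjoint_images_meet:
  assumes "finite U"
    and meet: "\<forall>x\<in>X. f x \<inter> U \<noteq> {}"
    and disj: "\<forall>x\<in>X. \<forall>y\<in>X. x \<noteq> y \<longrightarrow> f x \<inter> f y = {}"
  shows "card X \<le> card U"
proof -
  define g where "g x = (SOME u. u \<in> f x \<inter> U)" for x
  have g: "g x \<in> f x \<inter> U" if "x \<in> X" for x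
    unfolding g_def by (subst some_in_eq) (use meet that in blast)
  have "inj_on g X"
  proof (rule inj_onI)
    fix x y assume "x \<in> X" "y \<in> X" "g x = g y"
    then have "f x \<inter> f y \<noteq> {}"
      using g by (metis IntD1 disjoint_iff)
    with \<open>x \<in> X\<close> \<open>y \<in> X\<close> disj show "x = y"
      by blast
  qed
  moreover have "g ` X \<subseteq> U"
    using g by blast
  ultimately show ?thesis
    using \<open>finite U\<close> by (rule card_inj_on_le)
qed

lemma helper_edges_in_vnodes: "e \<in> helper_edges V E L l cls i \<Longrightarrow> fst ` e \<subseteq> vnodes V L"
  unfolding helper_edges_def helper_vnode_def by (elim CollectE exE conjE) simp

lemma finite_helper_edges_at_component:
  assumes "finite V"
  shows "finite {e \<in> helper_edges V E L l cls i. \<exists>v w. e = {(v, C), (w, C)}}"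
proof (rule finite_subset)
  show "{e \<in> helper_edges V E L l cls i. \<exists>v w. e = {(v, C), (w, C)}}
          \<subseteq> Pow (vnodes V L \<times> {C})"
    using helper_edges_in_vnodes by fastforce
  show "finite (Pow (vnodes V L \<times> {C}))"
    using finite_vnodes[OF assms] by simp
qed

lemma helper_edges_shape: "e \<in> helper_edges V E L l cls i \<Longrightarrow> \<exists>v w C. e = {(v, C), (w, C)}"
  unfolding helper_edges_def by (elim CollectE exE conjE) blast

lemma long_connector_meets_matched_edge:
  assumes sym: "\<forall>x y. E x y \<longrightarrow> E y x"
    and M: "maximal_matching (helper_edges V E L l cls i) M"
    and lc: "long_connector V E L l cls i C p"
  shows "\<exists>f\<in>M. (\<exists>v w. f = {(v, C), (w, C)}) \<and> internal p \<times> {C} \<inter> f \<noteq> {}"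
proof -
  let ?e = "internal p \<times> {C}"
  have e: "?e \<in> helper_edges V E L l cls i"
    using long_connector_in_helper_edges[OF sym lc] .
  obtain f where "f \<in> M" and "?e \<inter> f \<noteq> {}"
  proof (cases "?e \<in> M")
    case True
    moreover have "?e \<inter> ?e \<noteq> {}"
      by (cases p) simp
    ultimately show ?thesis
      by (rule that)
  next
    case False
    moreover have "\<forall>e\<in>helper_edges V E L l cls i - M. \<exists>f\<in>M. e \<inter> f \<noteq> {}"
      using M by (simp add: maximal_matching_def)
    ultimately show ?thesis
      using e that by blast
  qed
  moreover have "f \<in> helper_edges V E L l cls i"
    using M \<open>f \<in> M\<close> by (auto simp: maximal_matching_def)
  then obtain v' w' C0 where "f = {(v', C0), (w', C0)}"
    using helper_edges_shape by metis
  \<comment> \<open>a common node carries the component C as its second coordinate\<close>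
  moreover have "C0 = C"
    using \<open>?e \<inter> f \<noteq> {}\<close> \<open>f = _\<close> by auto
  ultimately show ?thesis
    by blast
qed

lemma card_long_connectors_le_matched_edges:
  assumes "finite V" and sym: "\<forall>x y. E x y \<longrightarrow> E y x"
    and P: "internally_disjoint P" "\<forall>p\<in>P. long_connector V E L l cls i C p"
    and M: "maximal_matching (helper_edges V E L l cls i) M"
  shows "card P \<le> 2 * card {e \<in> M. \<exists>v w. e = {(v, C), (w, C)}}"
proof -
  define MC where "MC = {e \<in> M. \<exists>v w. e = {(v, C), (w, C)}}"
  have "MC \<subseteq> {e \<in> helper_edges V E L l cls i. \<exists>v w. e = {(v, C), (w, C)}}"
    using M unfolding MC_def maximal_matching_def by auto
  then have "finite MC"
    using finite_helper_edges_at_component[OF \<open>finite V\<close>] by (rule finite_subset)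
  have card_MC: "\<forall>e\<in>MC. card e \<le> 2"
    unfolding MC_def by (auto simp: card_insert_if)
  have "finite (\<Union>MC)"
    using \<open>finite MC\<close> by (rule finite_Union) (auto simp: MC_def)
  have "\<forall>p\<in>P. internal p \<times> {C} \<inter> \<Union>MC \<noteq> {}"
  proof
    fix p assume "p \<in> P"
    then have "long_connector V E L l cls i C p"
      using P(2) by blast
    then have "\<exists>f\<in>M. (\<exists>v w. f = {(v, C), (w, C)}) \<and> internal p \<times> {C} \<inter> f \<noteq> {}"
      by (rule long_connector_meets_matched_edge[OF sym M])
    then obtain f where "f \<in> MC" "internal p \<times> {C} \<inter> f \<noteq> {}"
      unfolding MC_def by auto
    then show "internal p \<times> {C} \<inter> \<Union>MC \<noteq> {}"
      using Union_upper[of f MC] by (metis Int_mono bot.extremum_uniqueI order_refl)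
  qed
  moreover have "\<forall>p\<in>P. \<forall>q\<in>P. p \<noteq> q \<longrightarrow> internal p \<times> {C} \<inter> internal q \<times> {C} = {}"
    using P(1) unfolding internally_disjoint_def by blast
  ultimately have "card P \<le> card (\<Union>MC)"
    by (rule card_le_card_if_disjoint_images_meet[OF \<open>finite (\<Union>MC)\<close>])
  also have "\<dots> \<le> (\<Sum>e\<in>MC. card e)"
    by (rule card_Union_le_sum_card)
  also have "\<dots> \<le> card MC * 2"
    using sum_bounded_above[of MC card 2] card_MC by simp
  finally show ?thesis
    unfolding MC_def by simp
qed

lemma matched_edges_are_long_connectors:
  assumes sym: "\<forall>x y. E x y \<longrightarrow> E y x"
    and M: "maximal_matching (helper_edges V E L l cls i) M"
  obtains P where "internally_disjoint P" "\<forall>p\<in>P. long_connector V E L l cls i C p"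
    "card P = card {e \<in> M. \<exists>v w. e = {(v, C), (w, C)}}"
    "(\<lambda>p. internal p \<times> {C}) ` P = {e \<in> M. \<exists>v w. e = {(v, C), (w, C)}}"
proof -
  define MC where "MC = {e \<in> M. \<exists>v w. e = {(v, C), (w, C)}}"
  have M_disj: "\<forall>e\<in>M. \<forall>f\<in>M. e \<noteq> f \<longrightarrow> e \<inter> f = {}"
    using M by (simp add: maximal_matching_def)
  have "\<exists>p. long_connector V E L l cls i C p \<and> internal p \<times> {C} = e" if "e \<in> MC" for e
  proof -
    from that obtain v w where "e \<in> M" "e = {(v, C), (w, C)}"
      unfolding MC_def by blast
    moreover from \<open>e \<in> M\<close> have "e \<in> helper_edges V E L l cls i"
      using M by (auto simp: maximal_matching_def)
    ultimately show ?thesis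
      using helper_edge_at_component_is_connector_edge[OF sym] by blast
  qed
  then obtain g where g: "\<And>e. e \<in> MC \<Longrightarrow>
      long_connector V E L l cls i C (g e) \<and> internal (g e) \<times> {C} = e"
    by metis
  have "inj_on g MC"
    by (rule inj_onI) (metis g)
  have "(\<lambda>p. internal p \<times> {C}) ` g ` MC = MC"
    unfolding image_image using g by simp
  have "internally_disjoint (g ` MC)"
    unfolding internally_disjoint_def
  proof (intro ballI impI)
    fix p q assume "p \<in> g ` MC" "q \<in> g ` MC" "p \<noteq> q"
    then obtain e f where ef: "e \<in> MC" "f \<in> MC" "p = g e" "q = g f" "e \<noteq> f"
      by auto
    moreover have "e \<in> M" "f \<in> M"
      using ef unfolding MC_def by simp_all
    ultimately have "e \<inter> f = {}"
      using M_disj by blast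
    then have "(internal p \<inter> internal q) \<times> {C} = {}"
      using g ef by (simp add: Times_Int_distrib1)
    then show "internal p \<inter> internal q = {}"
      by simp
  qed
  moreover have "\<forall>p\<in>g ` MC. long_connector V E L l cls i C p"
    using g by blast
  moreover have "card (g ` MC) = card MC"
    using \<open>inj_on g MC\<close> by (rule card_image)
  ultimately show ?thesis
    using that \<open>(\<lambda>p. internal p \<times> {C}) ` g ` MC = MC\<close> unfolding MC_def by blast
qed

lemma long_connectors_from_maximal_matching:
  fixes c :: real and k :: nat
  assumes "finite V" and sym: "\<forall>x y. E x y \<longrightarrow> E y x"
    and "\<exists>P. internally_disjoint P \<and> (\<forall>p\<in>P. long_connector V E L l cls i C p) \<and>
           real (card P) \<ge> c * real k"
    and M: "maximal_matching (helper_edges V E L l cls i) M"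
  shows "\<exists>P. internally_disjoint P \<and> (\<forall>p\<in>P. long_connector V E L l cls i C p) \<and>
           real (card P) \<ge> c / 2 * real k \<and>
           (\<lambda>(s, v, w, u). {(v, C), (w, C)}) ` P = {e \<in> M. \<exists>v w. e = {(v, C), (w, C)}}"
proof -
  obtain P where "internally_disjoint P" "\<forall>p\<in>P. long_connector V E L l cls i C p"
    and P_large: "real (card P) \<ge> c * real k"
    using assms(3) by blast
  then have "card P \<le> 2 * card {e \<in> M. \<exists>v w. e = {(v, C), (w, C)}}"
    using card_long_connectors_le_matched_edges[OF \<open>finite V\<close> sym _ _ M] by blast
  moreover obtain P' where "internally_disjoint P'" "\<forall>p\<in>P'. long_connector V E L l cls i C p"
    "card P' = card {e \<in> M. \<exists>v w. e = {(v, C), (w, C)}}"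
    "(\<lambda>p. internal p \<times> {C}) ` P' = {e \<in> M. \<exists>v w. e = {(v, C), (w, C)}}"
    using matched_edges_are_long_connectors[OF sym M] .
  moreover have "real (card P) \<le> 2 * real (card P')"
    using calculation by simp
  ultimately show ?thesis
    using P_large unfolding connector_edge_eq by (intro exI[of _ P']) auto
qed

theorem lemma8:
  "\<forall>c::real. c > 0 \<longrightarrow> (\<exists>c'::real. c' > 0 \<and>
    (\<forall>(V :: nat set) (E :: nat \<Rightarrow> nat \<Rightarrow> bool) (L :: nat) (l :: nat) (t :: nat)
       (cls :: nat vnode \<Rightarrow> nat) (i :: nat) (C :: nat vnode set)
       (M :: (nat vnode \<times> nat vnode set) set set).
      finite V \<and> (\<forall>x y. E x y \<longrightarrow> x \<in> V \<and> y \<in> V) \<and> (\<forall>x y. E x y \<longrightarrow> E y x) \<and>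
      (\<forall>x. \<not> E x x) \<and>
      L + 1 \<le> l \<and> l \<le> 2 * L \<and>
      (\<forall>a\<in>vnodes V L. layer a < l \<longrightarrow> cls a \<in> {1..t}) \<and>
      i \<in> {1..t} \<and>
      C \<in> components V E L l cls i \<and>
      (\<exists>P. internally_disjoint P \<and> (\<forall>p\<in>P. long_connector V E L l cls i C p) \<and>
           real (card P) \<ge> c * real (vertex_connectivity V E)) \<and>
      maximal_matching (helper_edges V E L l cls i) M
      \<longrightarrow>
      (\<exists>P. internally_disjoint P \<and> (\<forall>p\<in>P. long_connector V E L l cls i C p) \<and>
           real (card P) \<ge> c' * real (vertex_connectivity V E) \<and>
           (\<lambda>(s, v, w, u). {(v, C), (w, C)}) ` P = {e \<in> M. \<exists>v w. e = {(v, C), (w, C)}})))"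
  apply (intro allI impI)
  subgoal for c
    by (intro exI[of _ "c / 2"] conjI allI impI, simp, elim conjE)
      (rule long_connectors_from_maximal_matching)
  done

end
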